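(* Let $N\ge2$, $\rho\in[0,1)$, $f<0$, $g<0$, and $\nu\in i\mathbb{R}$. Suppose the leader moves as $z_0(t)=e^{\nu t}$, so that $\Gamma_0(t)=g_0(\nu)e^{\nu t}$ with $g_0(\nu)=-(1-\rho)(f+g\nu)e_2$. Then $\nu$ is not an eigenvalue of $M$, and every solution $z(t)$ of $\dot z=Mz+\Gamma_0(t)$ satisfies $z(t)-a(\nu)e^{\nu t}\to0$ as $t\to\infty$, where $a(\nu)=-(M-\nu I)^{-1}g_0(\nu)$. In particular $z_k(t)-a_k(\nu)e^{\nu t}\to0$ for each $1\le k\le N$, where $a_k(\nu)$ is the $(2k-1)$-th entry of $a(\nu)$.
   Context: Model: agents $0,\dots,N$ on the line with deviations $z_k(t)$; leader trajectory $z_0$ prescribed; for $1\le i\le N-1$, $\ddot z_i=f\{z_i-(1-\rho)z_{i-1}-\rho z_{i+1}\}+g\{\dot z_i-(1-\rho)\dot z_{i-1}-\rho\dot z_{i+1}\}$, and $\ddot z_N=f\{z_N-z_{N-1}\}+g\{\dot z_N-\dot z_{N-1}\}$. In first-order form with $z=(z_1,\dot z_1,\dots,z_N,\dot z_N)^T\in\mathbb{C}^{2N}$: $\dot z=Mz+\Gamma_0(t)$, $M=I_N\otimes A+P\otimes K$, $A=\begin{pmatrix}0&1\\0&0\end{pmatrix}$, $K=\begin{pmatrix}0&0\\ f&g\end{pmatrix}$, $P=I_N-Q_\rho$ with $Q_\rho$ the $N\times N$ matrix with zero diagonal, $(Q_\rho)_{i,i+1}=\rho$ ($1\le i\le N-1$),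 $(Q_\rho)_{i,i-1}=1-\rho$ ($2\le i\le N-1$), $(Q_\rho)_{N,N-1}=1$, other entries $0$; $\Gamma_0(t)=-(1-\rho)(fz_0(t)+g\dot z_0(t))e_2$, $e_2$ the second standard basis vector of $\mathbb{C}^{2N}$. *)

theory Defs
  imports "HOL-Analysis.Analysis" "Jordan_Normal_Form.Char_Poly" "Jordan_Normal_Form.Gauss_Jordan_Elimination"
begin

definition kron :: "'a::times mat \<Rightarrow> 'a mat \<Rightarrow> 'a mat" where
  "kron X Y = mat (dim_row X * dim_row Y) (dim_col X * dim_col Y)
     (\<lambda>(i,j). X $$ (i div dim_row Y, j div dim_col Y) * Y $$ (i mod dim_row Y, j mod dim_col Y))"

definition Amat :: "complex mat" where
  "Amat = mat_of_rows_list 2 [[0,1],[0,0]]"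

definition Kmat :: "complex \<Rightarrow> complex \<Rightarrow> complex mat" where
  "Kmat f g = mat_of_rows_list 2 [[0,0],[f,g]]"

(* Q_rho, 0-indexed: rows/cols 0..N-1 correspond to agents 1..N *)
definition Qmat :: "nat \<Rightarrow> real \<Rightarrow> complex mat" where
  "Qmat N \<rho> = mat N N (\<lambda>(i,j).
     if i + 1 < N \<and> j = i + 1 then complex_of_real \<rho>
     else if 1 \<le> i \<and> i + 1 < N \<and> j + 1 = i then complex_of_real (1 - \<rho>)
     else if i + 1 = N \<and> j + 2 = N then 1
     else 0)"

definition Pmat :: "nat \<Rightarrow> real \<Rightarrow> complex mat" where
  "Pmat N \<rho> = 1\<^sub>m N - Qmat N \<rho>"

definition Mmat :: "nat \<Rightarrow> real \<Rightarrow> complex \<Rightarrow> complex \<Rightarrow> complex mat" where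
  "Mmat N \<rho> f g = kron (1\<^sub>m N) Amat + kron (Pmat N \<rho>) (Kmat f g)"

(* g_0(nu) = -(1-rho)(f + g nu) e_2; e_2 is index 1 (0-indexed) *)
definition g0vec :: "nat \<Rightarrow> real \<Rightarrow> complex \<Rightarrow> complex \<Rightarrow> complex \<Rightarrow> complex vec" where
  "g0vec N \<rho> f g \<nu> = (- (complex_of_real (1 - \<rho>) * (f + g * \<nu>))) \<cdot>\<^sub>v unit_vec (2*N) 1"

definition avec :: "nat \<Rightarrow> real \<Rightarrow> complex \<Rightarrow> complex \<Rightarrow> complex \<Rightarrow> complex vec" where
  "avec N \<rho> f g \<nu> = - (the (mat_inverse (Mmat N \<rho> f g - \<nu> \<cdot>\<^sub>m 1\<^sub>m (2*N))) *\<^sub>v g0vec N \<rho> f g \<nu>)"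

end

theory Submission
  imports Defs "Jordan_Normal_Form.Schur_Decomposition"
begin

text \<open>
  The error w = z - a(\<nu>) e^{\<nu> t} between a solution and the periodic response
  solves the homogeneous system w' = M w, so the theorem reduces to two facts:
  (1) M is Hurwitz, i.e. every eigenvalue has negative real part (in particular the purely
      imaginary \<nu> is not an eigenvalue, and a(\<nu>) is well defined);
  (2) every solution of w' = M w with M Hurwitz tends to 0.
  Fact (2) is proved by Schur triangularisation and backward induction over the triangular
  system, using a variation-of-constants estimate for scalar equations.  For fact (1), an
  eigenvector of M has velocities l x and positions x with l^2 x = (f + g l) P x.  Weighting
  the rows of P by detailed-balance weights makes it a positive definite Hermitian form
  (energy identity), so l^2 = mu (f + g l) with mu > 0, and such l lie in the left half-plane.
\<close>

text \<open>
  Variation-of-constants estimate for y' = l y + h on [T, t] with Re l < 0 and |h| \<le> d: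
  multiplying by the integrating factor exp(-l(s-T)) turns the equation into a bound on a
  derivative, to which the mean value inequality applies.
\<close>
lemma scalar_variation_bound:
  fixes y h :: "real \<Rightarrow> complex" and l :: complex
  assumes T_t: "T < t"
    and der: "\<And>s. s \<in> {T..t} \<Longrightarrow> (y has_vector_derivative (l * y s + h s)) (at s)"
    and h_bound: "\<And>s. s \<in> {T..t} \<Longrightarrow> norm (h s) \<le> d"
    and stable: "Re l < 0"
  shows "norm (y t) \<le> exp (Re l * (t - T)) * norm (y T) + d / (- Re l)"
proof -
  define a where "a = - Re l"
  have a: "a > 0" using stable a_def by simp
  have d: "d \<ge> 0" using h_bound[of T] T_t by (auto intro: order_trans[OF norm_ge_zero])
  define E where "E s = exp (- l * (complex_of_real s - complex_of_real T))" for s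
  define phi where "phi s = E s * y s" for s
  define Phi where "Phi s = d / a * exp (a * (s - T))" for s
  have E_der: "(E has_vector_derivative (- l * E s)) (at s)" for s
    unfolding E_def by (rule has_vector_derivative_real_field) (auto intro!: derivative_eq_intros)
  have norm_E: "norm (E s) = exp (a * (s - T))" for s
    unfolding E_def a_def by (simp add: norm_exp_eq_Re)
  have y_cont: "continuous_on {T..t} y"
    using der has_vector_derivative_continuous by (blast intro: continuous_at_imp_continuous_on)
  have "norm (phi t - phi T) \<le> Phi t - Phi T"
  proof (rule differentiable_bound_general[where f' = "\<lambda>s. E s * h s" and \<phi>' = "\<lambda>s. d * exp (a * (s - T))"])
    show "continuous_on {T..t} phi" unfolding phi_def E_def by (intro continuous_intros y_cont)
    show "continuous_on {T..t} Phi" unfolding Phi_def by (intro continuous_intros)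
    fix s assume s: "T < s" "s < t"
    show "(phi has_vector_derivative E s * h s) (at s)"
      using has_vector_derivative_mult[OF E_der der[of s]] s unfolding phi_def
      by (simp add: algebra_simps)
    show "(Phi has_vector_derivative d * exp (a * (s - T))) (at s)"
      unfolding Phi_def using a
      by (auto intro!: derivative_eq_intros simp: has_real_derivative_iff_has_vector_derivative[symmetric])
    show "norm (E s * h s) \<le> d * exp (a * (s - T))"
      using h_bound[of s] s by (simp add: norm_mult norm_E mult.commute mult_left_mono)
  qed (fact T_t)
  moreover have "Phi T \<ge> 0" unfolding Phi_def using a d by simp
  ultimately have "norm (phi t) \<le> norm (phi T) + Phi t"
    using norm_triangle_sub[of "phi t" "phi T"] by linarith
  then have "norm (phi t) \<le> norm (y T) + Phi t" unfolding phi_def E_def by simp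
  moreover have "y t = exp (l * (complex_of_real t - complex_of_real T)) * phi t"
    unfolding phi_def E_def by (simp add: exp_minus_inverse mult.assoc[symmetric] exp_add[symmetric])
  ultimately have "norm (y t) \<le> exp (- a * (t - T)) * (norm (y T) + Phi t)"
    unfolding a_def by (simp add: norm_mult norm_exp_eq_Re mult_left_mono)
  also have "\<dots> = exp (Re l * (t - T)) * norm (y T) + d / (- Re l)"
    unfolding Phi_def a_def using a by (simp add: algebra_simps exp_add[symmetric])
  finally show ?thesis .
qed

text \<open>
  A scalar linear equation with a stable coefficient and decaying forcing decays: after a time
  T where the forcing is below a given bound, the estimate above controls y.
\<close>
lemma scalar_decay:
  fixes y h :: "real \<Rightarrow> complex" and l :: complex
  assumes der: "\<And>t. t \<ge> t0 \<Longrightarrow> (y has_vector_derivative (l * y t + h t)) (at t within {t0..})"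
    and stable: "Re l < 0" and h_lim: "(h \<longlongrightarrow> 0) at_top"
  shows "(y \<longlongrightarrow> 0) at_top"
proof (rule tendstoI)
  fix e :: real assume e: "e > 0"
  define d where "d = - Re l * e / 4"
  have d: "d > 0" unfolding d_def using stable e by (simp add: mult_neg_pos)
  from tendstoD[OF h_lim d] obtain T0 where T0: "\<And>t. t \<ge> T0 \<Longrightarrow> norm (h t) < d"
    by (auto simp: eventually_at_top_linorder)
  define T where "T = max T0 (t0 + 1)"
  have der_at: "(y has_vector_derivative (l * y s + h s)) (at s)" if "s \<ge> T" for s
  proof -
    have "s \<in> interior {t0..}" using that T_def by simp
    then show ?thesis using der[of s] that T_def at_within_interior by fastforce
  qed
  have bound: "norm (y t) \<le> exp (Re l * (t - T)) * norm (y T) + e / 4" if "t > T" for t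
  proof -
    have eq: "d / (- Re l) = e / 4" unfolding d_def using stable by simp
    have "norm (y t) \<le> exp (Re l * (t - T)) * norm (y T) + d / (- Re l)"
      by (rule scalar_variation_bound[OF that _ _ stable]) (use der_at T0 T_def in \<open>auto intro: less_imp_le\<close>)
    then show ?thesis unfolding eq .
  qed
  have "((\<lambda>t. exp (Re l * (t - T)) * norm (y T)) \<longlongrightarrow> 0) at_top"
    using stable by real_asymp
  from tendstoD[OF this, of "e/2"] e obtain T1 where
    T1: "\<And>t. t \<ge> T1 \<Longrightarrow> exp (Re l * (t - T)) * norm (y T) < e / 2"
    by (auto simp: eventually_at_top_linorder)
  have "dist (y t) 0 < e" if "t \<ge> max T1 (T + 1)" for t
    using bound[of t] T1[of t] that e by simp
  then show "\<forall>\<^sub>F t in at_top. dist (y t) 0 < e"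
    unfolding eventually_at_top_linorder by blast
qed

lemma mult_mat_vec_index_sum:
  assumes "A \<in> carrier_mat n m" "v \<in> carrier_vec m" "k < n"
  shows "(A *\<^sub>v v) $ k = (\<Sum>j<m. A $$ (k,j) * v $ j)"
  using assms by (simp add: scalar_prod_def row_def lessThan_atLeast0)

text \<open>
  An upper triangular system with stable diagonal decays: by backward induction on the
  row, each component solves a stable scalar equation forced by already decaying components.
\<close>
lemma triangular_decay:
  fixes B :: "complex mat" and y :: "nat \<Rightarrow> real \<Rightarrow> complex"
  assumes B: "B \<in> carrier_mat n n" and tri: "upper_triangular B"
    and stable: "\<And>k. k < n \<Longrightarrow> Re (B $$ (k,k)) < 0"
    and der: "\<And>k t. t \<ge> t0 \<Longrightarrow> k < n \<Longrightarrow>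
      (y k has_vector_derivative (\<Sum>j<n. B $$ (k,j) * y j t)) (at t within {t0..})"
    and k: "k < n"
  shows "(y k \<longlongrightarrow> 0) at_top"
  using k
proof (induct "n - k" arbitrary: k rule: less_induct)
  case (less k)
  define h where "h t = (\<Sum>j\<in>{k<..<n}. B $$ (k,j) * y j t)" for t
  have "((\<lambda>t. \<Sum>j\<in>{k<..<n}. B $$ (k,j) * y j t) \<longlongrightarrow> (\<Sum>j\<in>{k<..<n}. B $$ (k,j) * 0)) at_top"
    by (intro tendsto_sum tendsto_mult less(1) tendsto_const) auto
  then have h_lim: "(h \<longlongrightarrow> 0) at_top" unfolding h_def by simp
  have "B $$ (k,j) = 0" if "j < k" for j
    using tri that less.prems B unfolding upper_triangular_def by auto
  then have "(\<Sum>j<n. B $$ (k,j) * y j t) = (\<Sum>j\<in>insert k {k<..<n}. B $$ (k,j) * y j t)" for t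
    by (intro sum.mono_neutral_right) (use less.prems in \<open>auto simp: not_less_iff_gr_or_eq\<close>)
  then have row: "(\<Sum>j<n. B $$ (k,j) * y j t) = B $$ (k,k) * y k t + h t" for t
    unfolding h_def by simp
  show ?case
    by (rule scalar_decay[of t0 "y k" "B $$ (k,k)" h])
       (use der[OF _ less.prems] row stable[OF less.prems] h_lim in auto)
qed

text \<open>
  Schur triangularisation of a Hurwitz matrix: M is similar to an upper triangular matrix
  whose diagonal consists of eigenvalues of M, hence has negative real parts.
\<close>
lemma hurwitz_schur_form:
  fixes M :: "complex mat"
  assumes M: "M \<in> carrier_mat n n" and hurwitz: "\<And>e. eigenvalue M e \<Longrightarrow> Re e < 0"
  obtains B P Q where "B \<in> carrier_mat n n" "P \<in> carrier_mat n n" "Q \<in> carrier_mat n n"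
    "P * Q = 1\<^sub>m n" "Q * M = B * Q" "upper_triangular B" "\<And>k. k < n \<Longrightarrow> Re (B $$ (k,k)) < 0"
proof -
  obtain es where cp: "char_poly M = (\<Prod>a\<leftarrow>es. [:- a, 1:])"
    using char_poly_factorized[OF M] by blast
  obtain B P Q where sd: "schur_decomposition M es = (B,P,Q)" by (metis prod_cases3)
  from schur_decomposition[OF M cp sd] have sim: "similar_mat_wit M B P Q"
    and tri: "upper_triangular B" and diag: "diag_mat B = es" by auto
  from sim M have carr: "B \<in> carrier_mat n n" "P \<in> carrier_mat n n" "Q \<in> carrier_mat n n"
    and PQ: "P * Q = 1\<^sub>m n" and QP: "Q * P = 1\<^sub>m n" and M_eq: "M = P * B * Q"
    unfolding similar_mat_wit_def Let_def by auto
  have "Re (B $$ (k,k)) < 0" if "k < n" for k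
  proof -
    have "B $$ (k,k) \<in> set es" unfolding diag[symmetric] diag_mat_def using that carr by auto
    then have "poly (char_poly M) (B $$ (k,k)) = 0" unfolding cp by (induct es) auto
    then show ?thesis using hurwitz eigenvalue_root_char_poly[OF M] by simp
  qed
  moreover have "Q * M = B * Q"
  proof -
    have "Q * M = (Q * (P * B)) * Q"
      unfolding M_eq by (rule assoc_mult_mat[symmetric, of _ n n _ n _ n]) (use carr in auto)
    also have "Q * (P * B) = (Q * P) * B"
      by (rule assoc_mult_mat[symmetric, of _ n n _ n _ n]) (use carr in auto)
    finally show ?thesis unfolding QP using carr by simp
  qed
  ultimately show ?thesis using that carr PQ tri by blast
qed

lemma intertwined_derivative:
  fixes M B Q :: "complex mat" and w :: "real \<Rightarrow> complex vec"
  assumes M: "M \<in> carrier_mat n n" and B: "B \<in> carrier_mat n n" and Q: "Q \<in> carrier_mat n n"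
    and QM: "Q * M = B * Q" and w: "w t \<in> carrier_vec n"
    and der: "\<And>i. i < n \<Longrightarrow> ((\<lambda>s. w s $ i) has_vector_derivative (M *\<^sub>v w t) $ i) F"
    and k: "k < n"
  shows "((\<lambda>s. \<Sum>j<n. Q $$ (k,j) * w s $ j) has_vector_derivative (B *\<^sub>v (Q *\<^sub>v w t)) $ k) F"
proof -
  have "((\<lambda>s. \<Sum>j<n. Q $$ (k,j) * w s $ j) has_vector_derivative (\<Sum>j<n. Q $$ (k,j) * (M *\<^sub>v w t) $ j)) F"
    by (intro has_vector_derivative_sum has_vector_derivative_mult_right der) auto
  moreover have "(\<Sum>j<n. Q $$ (k,j) * (M *\<^sub>v w t) $ j) = ((Q * M) *\<^sub>v w t) $ k"
    using mult_mat_vec_index_sum[of Q n n "M *\<^sub>v w t" k] M Q w k by simp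
  moreover have "((Q * M) *\<^sub>v w t) = B *\<^sub>v (Q *\<^sub>v w t)"
    unfolding QM using B Q w by simp
  ultimately show ?thesis by simp
qed

text \<open>
  Solutions of w' = M w decay when M is Hurwitz: in Schur coordinates y = Q w the system
  becomes triangular, and w = P y.
\<close>
lemma hurwitz_decay:
  fixes M :: "complex mat" and w :: "real \<Rightarrow> complex vec"
  assumes M: "M \<in> carrier_mat n n"
    and hurwitz: "\<And>e. eigenvalue M e \<Longrightarrow> Re e < 0"
    and dim: "\<And>t. t \<ge> t0 \<Longrightarrow> dim_vec (w t) = n"
    and der: "\<And>t i. t \<ge> t0 \<Longrightarrow> i < n \<Longrightarrow>
      ((\<lambda>s. w s $ i) has_vector_derivative (M *\<^sub>v w t) $ i) (at t within {t0..})"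
    and i: "i < n"
  shows "((\<lambda>t. w t $ i) \<longlongrightarrow> 0) at_top"
proof -
  obtain B P Q where carr: "B \<in> carrier_mat n n" "P \<in> carrier_mat n n" "Q \<in> carrier_mat n n"
    and PQ: "P * Q = 1\<^sub>m n" and QM: "Q * M = B * Q" and tri: "upper_triangular B"
    and stable: "\<And>k. k < n \<Longrightarrow> Re (B $$ (k,k)) < 0"
    using hurwitz_schur_form[OF M hurwitz] by blast
  have w_carr: "w t \<in> carrier_vec n" if "t \<ge> t0" for t using dim[OF that] by (rule carrier_vecI)
  define y where "y k t = (\<Sum>j<n. Q $$ (k,j) * w t $ j)" for k t
  have y_eq: "y k t = (Q *\<^sub>v w t) $ k" if "t \<ge> t0" "k < n" for k t
    unfolding y_def by (rule mult_mat_vec_index_sum[OF carr(3) w_carr[OF that(1)] that(2), symmetric])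
  have y_der: "(y k has_vector_derivative (\<Sum>j<n. B $$ (k,j) * y j t)) (at t within {t0..})"
    if t: "t \<ge> t0" and k: "k < n" for k t
  proof -
    have "(\<Sum>j<n. B $$ (k,j) * y j t) = (B *\<^sub>v (Q *\<^sub>v w t)) $ k"
      using mult_mat_vec_index_sum[of B n n "Q *\<^sub>v w t" k] carr w_carr[OF t] k y_eq[OF t] by simp
    then show ?thesis unfolding y_def
      using intertwined_derivative[OF M carr(1,3) QM w_carr[OF t] der[OF t] k] by simp
  qed
  have y_lim: "(y k \<longlongrightarrow> 0) at_top" if "k < n" for k
    by (rule triangular_decay[OF carr(1) tri stable y_der that])
  have "((\<lambda>t. \<Sum>k<n. P $$ (i,k) * y k t) \<longlongrightarrow> (\<Sum>k<n. P $$ (i,k) * 0)) at_top"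
    by (intro tendsto_sum tendsto_mult y_lim tendsto_const) auto
  then have lim: "((\<lambda>t. \<Sum>k<n. P $$ (i,k) * y k t) \<longlongrightarrow> 0) at_top" by simp
  have recover: "(\<Sum>k<n. P $$ (i,k) * y k t) = w t $ i" if t: "t \<ge> t0" for t
  proof -
    have "(\<Sum>k<n. P $$ (i,k) * y k t) = (P *\<^sub>v (Q *\<^sub>v w t)) $ i"
      using mult_mat_vec_index_sum[of P n n "Q *\<^sub>v w t" i] carr w_carr[OF t] i y_eq[OF t] by simp
    also have "\<dots> = ((P * Q) *\<^sub>v w t) $ i"
      by (simp only: assoc_mult_mat_vec[OF carr(2) carr(3) w_carr[OF t]])
    also have "\<dots> = w t $ i" unfolding PQ using w_carr[OF t] i by simp
    finally show ?thesis .
  qed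
  have "\<forall>\<^sub>F t in at_top. (\<Sum>k<n. P $$ (i,k) * y k t) = w t $ i"
    unfolding eventually_at_top_linorder using recover by blast
  from tendsto_cong[OF this] lim show ?thesis by simp
qed

text \<open>
  The eigenvalues of M are the roots of l^2 = mu (f + g l) with mu an eigenvalue of P.
  For mu > 0 and f, g < 0 every such root lies in the open left half-plane.
\<close>
lemma stable_quadratic_root:
  fixes l :: complex and mu f g :: real
  assumes mu: "mu > 0" and f: "f < 0" and g: "g < 0"
    and root: "l^2 = of_real mu * (of_real f + of_real g * l)"
  shows "Re l < 0"
proof -
  obtain a b where l: "l = Complex a b" by (cases l)
  from root have re: "a*a - b*b = mu * f + mu * g * a" and im: "2*a*b = mu * g * b"
    unfolding l by (simp_all add: complex_eq_iff power2_eq_square algebra_simps)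
  have mu_g: "mu * g < 0" and mu_f: "mu * f < 0" using mu f g by (simp_all add: mult_pos_neg)
  show ?thesis
  proof (cases "b = 0")
    case True
    have "a < 0"
    proof (rule ccontr)
      assume "\<not> a < 0"
      then have "mu * g * a \<le> 0" using mu_g by (simp add: mult_nonpos_nonneg)
      moreover have "a * a = mu * f + mu * g * a" using re True by simp
      moreover have "a * a \<ge> 0" by simp
      ultimately show False using mu_f by linarith
    qed
    then show ?thesis unfolding l by simp
  next
    case False
    with im have "2 * a = mu * g" by simp
    then show ?thesis unfolding l using mu_g by simp
  qed
qed

text \<open>
  Row k of the path matrix P of size n+2 applied to x (rows are indexed 0..n+1):
  the leading row couples only forward, the last row only backward.
\<close>
definition path_row :: "real \<Rightarrow> nat \<Rightarrow> (nat \<Rightarrow> complex) \<Rightarrow> nat \<Rightarrow> complex" where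
  "path_row \<rho> n x k =
     (if k = 0 then x 0 - of_real \<rho> * x 1
      else if k \<le> n then x k - of_real \<rho> * x (Suc k) - of_real (1 - \<rho>) * x (k - 1)
      else x k - x (k - 1))"

text \<open>For \<rho> = 0 the path matrix is unit lower bidiagonal, so its only eigenvalue is 1.\<close>
lemma path_eigen_rho0:
  assumes nonzero: "\<exists>k\<le>Suc n. x k \<noteq> 0"
    and rows: "\<And>k. k \<le> Suc n \<Longrightarrow> l^2 * x k = c * path_row 0 n x k"
  shows "l^2 = c"
proof (rule ccontr)
  assume ne: "l^2 \<noteq> c"
  have "x k = 0" if "k \<le> Suc n" for k
    using that
  proof (induct k)
    case 0
    then show ?case using rows[of 0] ne by (simp add: path_row_def)
  next
    case (Suc k)
    then have "l^2 * x (Suc k) = c * x (Suc k)" using rows[of "Suc k"] by (simp add: path_row_def)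
    then show ?case using ne by simp
  qed
  then show False using nonzero by blast
qed

lemma cnj_mult_self: "cnj z * z = complex_of_real ((cmod z)^2)"
  by (metis complex_norm_square mult.commute)

text \<open>
  Energy identity: with weights d satisfying the detailed-balance relations
  (1-\<rho>) d(k+1) = \<rho> d(k) and d(n+1) = \<rho> d(n), the weighted form
  sum d(k) conj(x k) (P x)(k) is a nonnegative combination of |x 0|^2 and the
  squared differences |x j - x (j+1)|^2; i.e. D P is a positive semidefinite Hermitian
  matrix.  The partial sums over the first m+1 rows are computed by induction on m; the
  last term is the part of the next squared difference already accounted for.
\<close>
lemma path_energy_partial:
  fixes d :: "nat \<Rightarrow> real" and \<rho> :: real
  assumes balance: "\<And>k. k < n \<Longrightarrow> (1 - \<rho>) * d (Suc k) = \<rho> * d k" and m: "m \<le> n"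
  shows "(\<Sum>k\<le>m. of_real (d k) * cnj (x k) * path_row \<rho> n x k)
    = of_real ((1 - \<rho>) * d 0) * (cnj (x 0) * x 0)
      + (\<Sum>j<m. of_real (\<rho> * d j) * (cnj (x j - x (Suc j)) * (x j - x (Suc j))))
      + of_real (\<rho> * d m) * (cnj (x m) * x m - cnj (x m) * x (Suc m))"
  using m
proof (induct m)
  case 0
  then show ?case by (simp add: path_row_def algebra_simps)
next
  case (Suc m)
  have bal: "of_real (1 - \<rho>) * of_real (d (Suc m)) = (of_real (\<rho> * d m) :: complex)"
    using balance[of m] Suc.prems by (metis Suc_le_lessD of_real_mult)
  have row: "path_row \<rho> n x (Suc m) = x (Suc m) - of_real \<rho> * x (Suc (Suc m)) - of_real (1 - \<rho>) * x m"
    using Suc.prems by (simp add: path_row_def)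
  let ?F = "\<lambda>k. of_real (d k) * cnj (x k) * path_row \<rho> n x k"
  let ?q = "\<lambda>j. of_real (\<rho> * d j) * (cnj (x j - x (Suc j)) * (x j - x (Suc j)))"
  let ?R = "\<lambda>j. of_real (\<rho> * d j) * (cnj (x j) * x j - cnj (x j) * x (Suc j))"
  let ?x0 = "of_real ((1 - \<rho>) * d 0) * (cnj (x 0) * x 0)"
  have step: "?R m + ?F (Suc m) = ?q m + ?R (Suc m)"
    unfolding row bal[symmetric] by (simp add: algebra_simps)
  have "(\<Sum>k\<le>Suc m. ?F k) = (\<Sum>k\<le>m. ?F k) + ?F (Suc m)" by simp
  also have "\<dots> = ?x0 + (\<Sum>j<m. ?q j) + (?R m + ?F (Suc m))"
    using Suc by (simp add: add.assoc)
  also have "\<dots> = ?x0 + (\<Sum>j<Suc m. ?q j) + ?R (Suc m)"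
    unfolding step by (simp add: add.assoc)
  finally show ?case .
qed

text \<open>The last row of P closes the telescoping sum, giving the full energy identity.\<close>
lemma path_energy_identity:
  fixes d :: "nat \<Rightarrow> real" and \<rho> :: real
  assumes balance: "\<And>k. k < n \<Longrightarrow> (1 - \<rho>) * d (Suc k) = \<rho> * d k"
    and balance_last: "d (Suc n) = \<rho> * d n"
  shows "(\<Sum>k\<le>Suc n. of_real (d k) * cnj (x k) * path_row \<rho> n x k)
    = of_real ((1 - \<rho>) * d 0 * (cmod (x 0))^2 + (\<Sum>j\<le>n. \<rho> * d j * (cmod (x j - x (Suc j)))^2))"
proof -
  let ?F = "\<lambda>k. of_real (d k) * cnj (x k) * path_row \<rho> n x k"
  let ?q = "\<lambda>j. of_real (\<rho> * d j) * (cnj (x j - x (Suc j)) * (x j - x (Suc j)))"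
  let ?R = "\<lambda>j. of_real (\<rho> * d j) * (cnj (x j) * x j - cnj (x j) * x (Suc j))"
  let ?x0 = "of_real ((1 - \<rho>) * d 0) * (cnj (x 0) * x 0)"
  have last: "?R n + ?F (Suc n) = ?q n"
    unfolding balance_last by (simp add: path_row_def algebra_simps)
  have "(\<Sum>k\<le>Suc n. ?F k) = (\<Sum>k\<le>n. ?F k) + ?F (Suc n)" by simp
  also have "\<dots> = ?x0 + (\<Sum>j<n. ?q j) + (?R n + ?F (Suc n))"
    using path_energy_partial[where d=d and \<rho>=\<rho> and n=n and m=n and x=x, OF balance order_refl]
    by (simp add: add.assoc)
  also have "\<dots> = ?x0 + (\<Sum>j\<le>n. ?q j)"
  proof -
    have "(\<Sum>j\<le>n. ?q j) = (\<Sum>j<Suc n. ?q j)" unfolding lessThan_Suc_atMost ..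
    also have "\<dots> = (\<Sum>j<n. ?q j) + ?q n" by (rule sum.lessThan_Suc)
    finally show ?thesis unfolding last by (simp only: add.assoc)
  qed
  also have "\<dots> = of_real ((1 - \<rho>) * d 0 * (cmod (x 0))^2 + (\<Sum>j\<le>n. \<rho> * d j * (cmod (x j - x (Suc j)))^2))"
    unfolding of_real_add of_real_sum by (simp only: cnj_mult_self of_real_mult mult.assoc)
  finally show ?thesis .
qed

text \<open>
  The detailed-balance weights of the path: d(k) = \<rho>^k (1-\<rho>)^(n-k) symmetrises P.
\<close>
definition path_weight :: "real \<Rightarrow> nat \<Rightarrow> nat \<Rightarrow> real" where
  "path_weight \<rho> n k = \<rho>^k * (1 - \<rho>)^(n - k)"

lemma path_weight_pos: "0 < \<rho> \<Longrightarrow> \<rho> < 1 \<Longrightarrow> path_weight \<rho> n k > 0"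
  unfolding path_weight_def by simp

lemma path_weight_balance:
  shows "k < n \<Longrightarrow> (1 - \<rho>) * path_weight \<rho> n (Suc k) = \<rho> * path_weight \<rho> n k"
    and "path_weight \<rho> n (Suc n) = \<rho> * path_weight \<rho> n n"
proof -
  assume "k < n"
  then have "n - k = Suc (n - Suc k)" by simp
  then show "(1 - \<rho>) * path_weight \<rho> n (Suc k) = \<rho> * path_weight \<rho> n k"
    unfolding path_weight_def by (simp add: algebra_simps)
qed (simp add: path_weight_def)

lemma path_energy_positive:
  fixes d :: "nat \<Rightarrow> real" and x :: "nat \<Rightarrow> complex"
  assumes rho: "0 < \<rho>" "\<rho> < 1" and d_pos: "\<And>k. d k > 0"
    and nonzero: "\<exists>k\<le>Suc n. x k \<noteq> 0"
  shows "(1 - \<rho>) * d 0 * (cmod (x 0))^2 + (\<Sum>j\<le>n. \<rho> * d j * (cmod (x j - x (Suc j)))^2) > 0"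
proof (rule ccontr)
  have terms: "(1 - \<rho>) * d 0 * (cmod (x 0))^2 \<ge> 0" "\<And>j. \<rho> * d j * (cmod (x j - x (Suc j)))^2 \<ge> 0"
    using rho d_pos by (simp_all add: less_imp_le)
  have sum: "(\<Sum>j\<le>n. \<rho> * d j * (cmod (x j - x (Suc j)))^2) \<ge> 0"
    by (rule sum_nonneg) (rule terms(2))
  assume "\<not> ?thesis"
  then have "(1 - \<rho>) * d 0 * (cmod (x 0))^2 = 0" "(\<Sum>j\<le>n. \<rho> * d j * (cmod (x j - x (Suc j)))^2) = 0"
    using terms(1) sum by linarith+
  then have "x 0 = 0" "\<And>j. j \<le> n \<Longrightarrow> x (Suc j) = x j"
    using rho by (auto simp: sum_nonneg_eq_0_iff terms(2) d_pos[THEN less_imp_neq, symmetric])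
  then have "x k = 0" if "k \<le> Suc n" for k using that by (induct k) auto
  then show False using nonzero by blast
qed

text \<open>
  For 0 < \<rho> < 1, if l^2 x = c P x for a nonzero x then l^2 = mu c with mu > 0: pairing the
  equation with the weights d gives l^2 (sum d |x|^2) = c E with both sums positive.
\<close>
lemma path_eigen_ratio_pos:
  fixes x :: "nat \<Rightarrow> complex" and l c :: complex
  assumes rho: "0 < \<rho>" "\<rho> < 1"
    and nonzero: "\<exists>k\<le>Suc n. x k \<noteq> 0"
    and rows: "\<And>k. k \<le> Suc n \<Longrightarrow> l^2 * x k = c * path_row \<rho> n x k"
  shows "\<exists>mu>0. l^2 = of_real mu * c"
proof -
  define d where "d = path_weight \<rho> n"
  have d_pos: "d k > 0" for k unfolding d_def using path_weight_pos[OF rho] .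
  define S where "S = (\<Sum>k\<le>Suc n. d k * (cmod (x k))^2)"
  define E where "E = (1 - \<rho>) * d 0 * (cmod (x 0))^2 + (\<Sum>j\<le>n. \<rho> * d j * (cmod (x j - x (Suc j)))^2)"
  obtain k0 where k0: "k0 \<le> Suc n" "x k0 \<noteq> 0" using nonzero by blast
  have "d k0 * (cmod (x k0))^2 > 0" using k0 d_pos[of k0] by simp
  then have S_pos: "S > 0" unfolding S_def
    by (intro sum_pos2[of "{..Suc n}" k0]) (use k0 in \<open>auto intro!: mult_nonneg_nonneg less_imp_le[OF d_pos]\<close>)
  have E_pos: "E > 0" unfolding E_def by (rule path_energy_positive[OF rho d_pos nonzero])
  have "of_real S * l^2 = (\<Sum>k\<le>Suc n. of_real (d k) * cnj (x k) * (l^2 * x k))"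
    unfolding S_def of_real_sum sum_distrib_right
    by (rule sum.cong) (simp_all add: cnj_mult_self[unfolded of_real_power, symmetric] algebra_simps)
  also have "\<dots> = (\<Sum>k\<le>Suc n. c * (of_real (d k) * cnj (x k) * path_row \<rho> n x k))"
  proof (rule sum.cong)
    fix k assume "k \<in> {..Suc n}"
    then show "of_real (d k) * cnj (x k) * (l^2 * x k) = c * (of_real (d k) * cnj (x k) * path_row \<rho> n x k)"
      using rows[of k] by (simp add: mult.left_commute)
  qed simp
  also have "\<dots> = c * (\<Sum>k\<le>Suc n. of_real (d k) * cnj (x k) * path_row \<rho> n x k)"
    by (rule sum_distrib_left[symmetric])
  also have "\<dots> = c * of_real E"
    using path_energy_identity[where d="path_weight \<rho> n" and x=x, OF path_weight_balance]
    unfolding E_def d_def by simp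
  finally have "l^2 = of_real (E / S) * c"
    using S_pos by (simp add: field_simps)
  then show ?thesis using E_pos S_pos by (intro exI[of _ "E / S"]) simp
qed

lemma path_eigen_ratio:
  fixes x :: "nat \<Rightarrow> complex" and l c :: complex
  assumes rho: "0 \<le> \<rho>" "\<rho> < 1"
    and nonzero: "\<exists>k\<le>Suc n. x k \<noteq> 0"
    and rows: "\<And>k. k \<le> Suc n \<Longrightarrow> l^2 * x k = c * path_row \<rho> n x k"
  shows "\<exists>mu>0. l^2 = of_real mu * c"
proof (cases "\<rho> = 0")
  case True
  then show ?thesis using path_eigen_rho0[OF nonzero] rows by (intro exI[of _ 1]) auto
next
  case False
  then show ?thesis using path_eigen_ratio_pos[OF _ rho(2) nonzero rows] rho(1) by simp
qed

lemma Amat_dims[simp]: "dim_row Amat = 2" "dim_col Amat = 2"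
  by (simp_all add: Amat_def mat_of_rows_list_def)
lemma Kmat_dims[simp]: "dim_row (Kmat f g) = 2" "dim_col (Kmat f g) = 2"
  by (simp_all add: Kmat_def mat_of_rows_list_def)
lemma Pmat_dims[simp]: "dim_row (Pmat N \<rho>) = N" "dim_col (Pmat N \<rho>) = N"
  by (simp_all add: Pmat_def Qmat_def)
lemma kron_dims[simp]: "dim_row (kron X Y) = dim_row X * dim_row Y" "dim_col (kron X Y) = dim_col X * dim_col Y"
  by (simp_all add: kron_def)
lemma kron_idx: "i < dim_row X * dim_row Y \<Longrightarrow> j < dim_col X * dim_col Y \<Longrightarrow>
  kron X Y $$ (i,j) = X $$ (i div dim_row Y, j div dim_col Y) * Y $$ (i mod dim_row Y, j mod dim_col Y)"
  by (simp add: kron_def)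

lemma Amat_idx: assumes "a < 2" "b < 2" shows "Amat $$ (a,b) = (if a = 0 \<and> b = 1 then 1 else 0)"
proof -
  have "a = 0 \<or> a = 1" "b = 0 \<or> b = 1" using assms by arith+
  then show ?thesis by (elim disjE) (simp_all add: Amat_def mat_of_rows_list_def)
qed
lemma Kmat_idx: assumes "a < 2" "b < 2" shows "Kmat f g $$ (a,b) = (if a = 1 then (if b = 0 then f else g) else 0)"
proof -
  have "a = 0 \<or> a = 1" "b = 0 \<or> b = 1" using assms by arith+
  then show ?thesis by (elim disjE) (simp_all add: Kmat_def mat_of_rows_list_def)
qed

lemma Mmat_dims: "dim_row (Mmat N \<rho> f g) = 2*N" "dim_col (Mmat N \<rho> f g) = 2*N"
  unfolding Mmat_def index_add_mat(2,3) kron_dims Pmat_dims Kmat_dims by simp_all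

lemma Mmat_carrier: "Mmat N \<rho> f g \<in> carrier_mat (2*N) (2*N)"
  by (rule carrier_matI) (rule Mmat_dims)+

lemma Mmat_idx: assumes "i < 2*N" "j < 2*N"
  shows "Mmat N \<rho> f g $$ (i,j) = (if i div 2 = j div 2 then 1 else 0) * Amat $$ (i mod 2, j mod 2)
     + Pmat N \<rho> $$ (i div 2, j div 2) * Kmat f g $$ (i mod 2, j mod 2)"
proof -
  have "i div 2 < N" "j div 2 < N" using assms by auto
  then show ?thesis using assms unfolding Mmat_def
    by (simp add: kron_idx mult.commute)
qed

lemma sum_pairs: "(\<Sum>j<2*(N::nat). h j) = (\<Sum>m<N. h (2*m) + h (2*m+1))"
  by (induct N) (simp_all add: algebra_simps)

text \<open>
  The block structure of M: the position row of agent k returns its velocity, the velocity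
  row couples the agents through P.
\<close>
lemma Mmat_mult_vec_even: assumes v: "v \<in> carrier_vec (2*N)" and k: "k < N"
  shows "(Mmat N \<rho> f g *\<^sub>v v) $ (2*k) = v $ (2*k+1)"
proof -
  have "(Mmat N \<rho> f g *\<^sub>v v) $ (2*k) = (\<Sum>j<2*N. Mmat N \<rho> f g $$ (2*k, j) * v $ j)"
    by (rule mult_mat_vec_index_sum[OF Mmat_carrier v]) (use k in simp)
  also have "\<dots> = (\<Sum>m<N. Mmat N \<rho> f g $$ (2*k, 2*m) * v $ (2*m) + Mmat N \<rho> f g $$ (2*k, 2*m+1) * v $ (2*m+1))"
    by (rule sum_pairs)
  also have "\<dots> = (\<Sum>m<N. if k = m then v $ (2*m+1) else 0)"
  proof (rule sum.cong)
    fix m assume m: "m \<in> {..<N}"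
    have e: "(2*m+1) div 2 = m" "(2*m+1) mod 2 = 1" by presburger+
    show "Mmat N \<rho> f g $$ (2*k, 2*m) * v $ (2*m) + Mmat N \<rho> f g $$ (2*k, 2*m+1) * v $ (2*m+1)
      = (if k = m then v $ (2*m+1) else 0)"
      using m k by (simp add: Mmat_idx e Amat_idx Kmat_idx)
  qed simp
  also have "\<dots> = v $ (2*k+1)" using k by simp
  finally show ?thesis .
qed

lemma Mmat_mult_vec_odd: assumes v: "v \<in> carrier_vec (2*N)" and k: "k < N"
  shows "(Mmat N \<rho> f g *\<^sub>v v) $ (2*k+1) = (\<Sum>m<N. Pmat N \<rho> $$ (k,m) * (f * v $ (2*m) + g * v $ (2*m+1)))"
proof -
  have "(Mmat N \<rho> f g *\<^sub>v v) $ (2*k+1) = (\<Sum>j<2*N. Mmat N \<rho> f g $$ (2*k+1, j) * v $ j)"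
    by (rule mult_mat_vec_index_sum[OF Mmat_carrier v]) (use k in simp)
  also have "\<dots> = (\<Sum>m<N. Mmat N \<rho> f g $$ (2*k+1, 2*m) * v $ (2*m) + Mmat N \<rho> f g $$ (2*k+1, 2*m+1) * v $ (2*m+1))"
    by (rule sum_pairs)
  also have "\<dots> = (\<Sum>m<N. Pmat N \<rho> $$ (k,m) * (f * v $ (2*m) + g * v $ (2*m+1)))"
  proof (rule sum.cong)
    fix m assume m: "m \<in> {..<N}"
    have e: "(2*m+1) div 2 = m" "(2*m+1) mod 2 = 1" "(2*k+1) div 2 = k" "(2*k+1) mod 2 = 1" by presburger+
    have l: "2*k+1 < 2*N" "2*m < 2*N" "2*m+1 < 2*N" using m k by auto
    show "Mmat N \<rho> f g $$ (2*k+1, 2*m) * v $ (2*m) + Mmat N \<rho> f g $$ (2*k+1, 2*m+1) * v $ (2*m+1)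
      = Pmat N \<rho> $$ (k,m) * (f * v $ (2*m) + g * v $ (2*m+1))"
      unfolding Mmat_idx[OF l(1) l(2)] Mmat_idx[OF l(1) l(3)] e by (simp add: Amat_idx Kmat_idx algebra_simps)
  qed simp
  finally show ?thesis .
qed

lemma Pmat_idx: assumes "k < N" "m < N"
  shows "Pmat N \<rho> $$ (k,m) = (if k = m then 1 else 0) -
    (if k+1 < N \<and> m = k+1 then complex_of_real \<rho> else if 1 \<le> k \<and> k+1 < N \<and> m+1 = k then complex_of_real (1 - \<rho>)
     else if k+1 = N \<and> m+2 = N then 1 else 0)"
  using assms unfolding Pmat_def by (simp add: Qmat_def)

lemma Pmat_row_sum:
  assumes k: "k \<le> Suc n"
  shows "(\<Sum>m<Suc (Suc n). Pmat (Suc (Suc n)) \<rho> $$ (k,m) * x m) = path_row \<rho> n x k"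
proof -
  consider "k = 0" | j where "k = Suc j" "j < n" | "k = Suc n" using k
    by (metis Suc_le_lessD le_SucE not0_implies_Suc)
  then show ?thesis
  proof cases
    case 1
    have "(\<Sum>m<Suc (Suc n). Pmat (Suc (Suc n)) \<rho> $$ (k,m) * x m) =
      (\<Sum>m<Suc (Suc n). (if m = 0 then x 0 else 0) - (if m = 1 then of_real \<rho> * x 1 else 0))"
      by (rule sum.cong) (auto simp: Pmat_idx 1)
    also have "\<dots> = x 0 - of_real \<rho> * x 1" by (simp add: sum_subtractf)
    also have "\<dots> = path_row \<rho> n x k" using 1 by (simp add: path_row_def)
    finally show ?thesis .
  next
    case (2 j)
    have "(\<Sum>m<Suc (Suc n). Pmat (Suc (Suc n)) \<rho> $$ (k,m) * x m) =
      (\<Sum>m<Suc (Suc n). (if m = Suc j then x (Suc j) else 0) - (if m = Suc (Suc j) then of_real \<rho> * x (Suc (Suc j)) else 0)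
         - (if m = j then of_real (1 - \<rho>) * x j else 0))"
      by (rule sum.cong) (use 2 in \<open>auto simp: Pmat_idx algebra_simps\<close>)
    also have "\<dots> = x (Suc j) - of_real \<rho> * x (Suc (Suc j)) - of_real (1 - \<rho>) * x j"
      using 2 by (simp add: sum_subtractf algebra_simps)
    also have "\<dots> = path_row \<rho> n x k" using 2 by (simp add: path_row_def)
    finally show ?thesis .
  next
    case 3
    have "(\<Sum>m<Suc (Suc n). Pmat (Suc (Suc n)) \<rho> $$ (k,m) * x m) =
      (\<Sum>m<Suc (Suc n). (if m = Suc n then x (Suc n) else 0) - (if m = n then x n else 0))"
      by (rule sum.cong) (auto simp: Pmat_idx 3)
    also have "\<dots> = x (Suc n) - x n" by (simp add: sum_subtractf)
    also have "\<dots> = path_row \<rho> n x k" using 3 by (simp add: path_row_def)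
    finally show ?thesis .
  qed
qed

text \<open>
  An eigenvector v of M with eigenvalue l is determined by its positions x k = v (2k):
  the velocities are l x k, and x is a nonzero solution of l^2 x = (f + g l) P x.
\<close>
lemma Mmat_eigen_reduction:
  fixes f g :: complex
  assumes ev: "eigenvalue (Mmat (Suc (Suc n)) \<rho> f g) l"
  obtains x where "\<exists>k\<le>Suc n. x k \<noteq> 0"
    and "\<And>k. k \<le> Suc n \<Longrightarrow> l^2 * x k = (f + g * l) * path_row \<rho> n x k"
proof -
  define N where "N = Suc (Suc n)"
  let ?M = "Mmat N \<rho> f g"
  from ev obtain v where v: "v \<in> carrier_vec (2*N)" and v0: "v \<noteq> 0\<^sub>v (2*N)" and Mv: "?M *\<^sub>v v = l \<cdot>\<^sub>v v"
    unfolding eigenvalue_def eigenvector_def N_def by (auto simp: Mmat_dims)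
  define x where "x k = v $ (2*k)" for k
  have velocity: "v $ (2*k+1) = l * x k" if "k < N" for k
  proof -
    have "v $ (2*k+1) = (?M *\<^sub>v v) $ (2*k)" using Mmat_mult_vec_even[OF v that] by simp
    also have "\<dots> = l * x k" unfolding Mv x_def using v that by simp
    finally show ?thesis .
  qed
  have rows: "l^2 * x k = (f + g * l) * path_row \<rho> n x k" if k: "k \<le> Suc n" for k
  proof -
    have kN: "k < N" using k N_def by simp
    have "l^2 * x k = (?M *\<^sub>v v) $ (2*k+1)"
      unfolding Mv using v kN velocity[OF kN] by (simp add: power2_eq_square)
    also have "\<dots> = (\<Sum>m<N. Pmat N \<rho> $$ (k,m) * (f * v $ (2*m) + g * v $ (2*m+1)))"
      by (rule Mmat_mult_vec_odd[OF v kN])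
    also have "\<dots> = (f + g * l) * (\<Sum>m<N. Pmat N \<rho> $$ (k,m) * x m)"
      unfolding sum_distrib_left
    proof (rule sum.cong)
      fix m assume "m \<in> {..<N}"
      then have "v $ (2*m+1) = l * x m" using velocity by simp
      then show "Pmat N \<rho> $$ (k,m) * (f * v $ (2*m) + g * v $ (2*m+1)) = (f + g * l) * (Pmat N \<rho> $$ (k,m) * x m)"
        by (simp add: x_def algebra_simps)
    qed simp
    also have "\<dots> = (f + g * l) * path_row \<rho> n x k"
      unfolding N_def Pmat_row_sum[OF k] ..
    finally show ?thesis .
  qed
  have "\<exists>k\<le>Suc n. x k \<noteq> 0"
  proof (rule ccontr)
    assume "\<not> ?thesis"
    then have zero: "x k = 0" if "k < N" for k using that N_def by auto
    have "v = 0\<^sub>v (2*N)"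
    proof (rule eq_vecI)
      fix i assume "i < dim_vec (0\<^sub>v (2*N))"
      then have i: "i < 2*N" and k: "i div 2 < N" by auto
      have "i = 2 * (i div 2) \<or> i = 2 * (i div 2) + 1" by presburger
      then show "v $ i = 0\<^sub>v (2*N) $ i"
        using zero[OF k] velocity[OF k] i unfolding x_def by auto
    qed (use v in simp)
    then show False using v0 by simp
  qed
  with rows show ?thesis using that by blast
qed

lemma Mmat_hurwitz:
  fixes \<rho> f g :: real
  assumes N: "N \<ge> 2" and rho: "0 \<le> \<rho>" "\<rho> < 1" and f: "f < 0" and g: "g < 0"
    and ev: "eigenvalue (Mmat N \<rho> (complex_of_real f) (complex_of_real g)) l"
  shows "Re l < 0"
proof -
  obtain n where Nn: "N = Suc (Suc n)" using N by (metis add_2_eq_Suc le_Suc_ex)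
  obtain x where nonzero: "\<exists>k\<le>Suc n. x k \<noteq> 0"
    and rows: "\<And>k. k \<le> Suc n \<Longrightarrow> l^2 * x k = (of_real f + of_real g * l) * path_row \<rho> n x k"
    using Mmat_eigen_reduction ev unfolding Nn by blast
  obtain mu where "mu > 0" "l^2 = of_real mu * (of_real f + of_real g * l)"
    using path_eigen_ratio[OF rho nonzero rows] by blast
  then show ?thesis using stable_quadratic_root f g by blast
qed

text \<open>
  When \<nu> is not an eigenvalue of M, the resolvent gives the amplitude of the periodic response:
  a = -(M - \<nu> I)^{-1} g0 solves (M - \<nu> I) a = -g0, so a e^{\<nu> t} solves z' = M z + e^{\<nu> t} g0.
\<close>
lemma resolvent_amplitude:
  fixes M :: "'a::field mat"
  assumes M: "M \<in> carrier_mat n n" and not_eig: "\<not> eigenvalue M \<nu>" and g0: "g0 \<in> carrier_vec n"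
  defines "a \<equiv> - (the (mat_inverse (M - \<nu> \<cdot>\<^sub>m 1\<^sub>m n)) *\<^sub>v g0)"
  shows "a \<in> carrier_vec n" and "(M - \<nu> \<cdot>\<^sub>m 1\<^sub>m n) *\<^sub>v a = - g0"
proof -
  define Mn where "Mn = M - \<nu> \<cdot>\<^sub>m 1\<^sub>m n"
  have Mn: "Mn \<in> carrier_mat n n" unfolding Mn_def using M by (intro carrier_matI) auto
  have "char_matrix M \<nu> = Mn"
    unfolding char_matrix_def Mn_def using M by (intro eq_matI) auto
  then have "det Mn \<noteq> 0" using not_eig eigenvalue_det[OF M] by simp
  then have "Mn \<in> Units (ring_mat TYPE('a) n ())" by (rule det_non_zero_imp_unit[OF Mn])
  then obtain B where inv: "mat_inverse Mn = Some B"
    using mat_inverse(1)[OF Mn] by fastforce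
  from mat_inverse(2)[OF Mn inv] have MnB: "Mn * B = 1\<^sub>m n" and B: "B \<in> carrier_mat n n" by auto
  have a_eq: "a = - (B *\<^sub>v g0)" unfolding a_def Mn_def[symmetric] inv by simp
  show "a \<in> carrier_vec n" unfolding a_eq using B g0 by simp
  have "Mn *\<^sub>v a = - (Mn *\<^sub>v (B *\<^sub>v g0))"
    unfolding a_eq using Mn B g0 by (intro eq_vecI) auto
  also have "Mn *\<^sub>v (B *\<^sub>v g0) = g0"
    unfolding assoc_mult_mat_vec[OF Mn B g0, symmetric] MnB using g0 by simp
  finally show "(M - \<nu> \<cdot>\<^sub>m 1\<^sub>m n) *\<^sub>v a = - g0" unfolding Mn_def .
qed

lemma periodic_response_error:
  fixes M :: "complex mat" and z :: "real \<Rightarrow> complex vec"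
  assumes M: "M \<in> carrier_mat n n" and a: "a \<in> carrier_vec n"
    and amplitude: "(M - \<nu> \<cdot>\<^sub>m 1\<^sub>m n) *\<^sub>v a = - g0"
    and z_dim: "dim_vec (z t) = n"
    and z_der: "\<And>i. i < n \<Longrightarrow> ((\<lambda>s. z s $ i) has_vector_derivative
      ((M *\<^sub>v z t + exp (\<nu> * complex_of_real t) \<cdot>\<^sub>v g0) $ i)) (at t within S)"
    and i: "i < n"
  shows "((\<lambda>s. (z s - exp (\<nu> * complex_of_real s) \<cdot>\<^sub>v a) $ i) has_vector_derivative
      (M *\<^sub>v (z t - exp (\<nu> * complex_of_real t) \<cdot>\<^sub>v a)) $ i) (at t within S)"
proof -
  let ?e = "\<lambda>s. exp (\<nu> * complex_of_real s)"
  have z: "z t \<in> carrier_vec n" using z_dim by (rule carrier_vecI)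
  have g0_dim: "dim_vec g0 = n" using arg_cong[OF amplitude, of dim_vec] M by simp
  have Ma: "(M *\<^sub>v a) $ i = \<nu> * a $ i - g0 $ i"
  proof -
    have "\<nu> \<cdot>\<^sub>v a = \<nu> \<cdot>\<^sub>v (1\<^sub>m n *\<^sub>v a)" using a by simp
    also have "\<dots> = (\<nu> \<cdot>\<^sub>m 1\<^sub>m n) *\<^sub>v a" using a by auto
    finally have "(M - \<nu> \<cdot>\<^sub>m 1\<^sub>m n) *\<^sub>v a = M *\<^sub>v a - \<nu> \<cdot>\<^sub>v a"
      using minus_mult_distrib_mat_vec[OF M _ a, of "\<nu> \<cdot>\<^sub>m 1\<^sub>m n"] by simp
    then show ?thesis using amplitude M a i by (simp add: vec_eq_iff algebra_simps)
  qed
  have e_der: "((\<lambda>s. ?e s * a $ i) has_vector_derivative (\<nu> * ?e t * a $ i)) (at t within S)"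
    by (rule has_vector_derivative_real_field) (auto intro!: derivative_eq_intros)
  have "((\<lambda>s. z s $ i - ?e s * a $ i) has_vector_derivative
      ((M *\<^sub>v z t + ?e t \<cdot>\<^sub>v g0) $ i - \<nu> * ?e t * a $ i)) (at t within S)"
    by (rule has_vector_derivative_diff[OF z_der[OF i] e_der])
  moreover have "(M *\<^sub>v z t + ?e t \<cdot>\<^sub>v g0) $ i - \<nu> * ?e t * a $ i
      = (M *\<^sub>v (z t - ?e t \<cdot>\<^sub>v a)) $ i"
  proof -
    have "M *\<^sub>v (z t - ?e t \<cdot>\<^sub>v a) = M *\<^sub>v z t - ?e t \<cdot>\<^sub>v (M *\<^sub>v a)"
      using M a z by (simp add: mult_minus_distrib_mat_vec mult_mat_vec)
    then show ?thesis
      using M i g0_dim by (simp add: Ma algebra_simps del: index_mult_mat_vec)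
  qed
  moreover have "(\<lambda>s. (z s - ?e s \<cdot>\<^sub>v a) $ i) = (\<lambda>s. z s $ i - ?e s * a $ i)"
    using a i by simp
  ultimately show ?thesis by simp
qed

theorem mainTheorem3:
  fixes N :: nat and \<rho> f g :: real and \<nu> :: complex
  assumes "N \<ge> 2" and "0 \<le> \<rho>" and "\<rho> < 1" and "f < 0" and "g < 0" and "Re \<nu> = 0"
  shows "\<not> eigenvalue (Mmat N \<rho> (complex_of_real f) (complex_of_real g)) \<nu>
    \<and> (\<forall>(z :: real \<Rightarrow> complex vec) (t0 :: real).
         (\<forall>t\<ge>t0. dim_vec (z t) = 2*N \<and>
            (\<forall>i<2*N. ((\<lambda>s. z s $ i) has_vector_derivative
               ((Mmat N \<rho> (complex_of_real f) (complex_of_real g) *\<^sub>v z t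
                 + exp (\<nu> * complex_of_real t) \<cdot>\<^sub>v g0vec N \<rho> (complex_of_real f) (complex_of_real g) \<nu>) $ i))
               (at t within {t0..})))
       \<longrightarrow> (\<forall>i<2*N. ((\<lambda>t. z t $ i - exp (\<nu> * complex_of_real t) * avec N \<rho> (complex_of_real f) (complex_of_real g) \<nu> $ i)
                        \<longlongrightarrow> 0) at_top)
         \<and> (\<forall>k\<in>{1..N}. ((\<lambda>t. z t $ (2*k-2) - exp (\<nu> * complex_of_real t) * avec N \<rho> (complex_of_real f) (complex_of_real g) \<nu> $ (2*k-2))
                        \<longlongrightarrow> 0) at_top))"
proof -
  define M where "M = Mmat N \<rho> (complex_of_real f) (complex_of_real g)"
  define a where "a = avec N \<rho> (complex_of_real f) (complex_of_real g) \<nu>"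
  define g0 where "g0 = g0vec N \<rho> (complex_of_real f) (complex_of_real g) \<nu>"
  have M: "M \<in> carrier_mat (2*N) (2*N)" unfolding M_def by (rule Mmat_carrier)
  have hurwitz: "\<And>e. eigenvalue M e \<Longrightarrow> Re e < 0"
    using Mmat_hurwitz[OF assms(1-5)] unfolding M_def by blast
  then have not_eig: "\<not> eigenvalue M \<nu>" using assms(6) by force
  have g0: "g0 \<in> carrier_vec (2*N)" unfolding g0_def g0vec_def by simp
  have a: "a \<in> carrier_vec (2*N)" and amplitude: "(M - \<nu> \<cdot>\<^sub>m 1\<^sub>m (2*N)) *\<^sub>v a = - g0"
    using resolvent_amplitude[OF M not_eig g0]
    unfolding a_def avec_def M_def g0_def by simp_all
  have decay: "((\<lambda>t. z t $ i - exp (\<nu> * complex_of_real t) * a $ i) \<longlongrightarrow> 0) at_top"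
    if sol: "\<forall>t\<ge>t0. dim_vec (z t) = 2*N \<and> (\<forall>i<2*N. ((\<lambda>s. z s $ i) has_vector_derivative
      ((M *\<^sub>v z t + exp (\<nu> * complex_of_real t) \<cdot>\<^sub>v g0) $ i)) (at t within {t0..}))"
      and i: "i < 2*N" for z t0 i
  proof -
    let ?w = "\<lambda>t. z t - exp (\<nu> * complex_of_real t) \<cdot>\<^sub>v a"
    have "((\<lambda>t. ?w t $ i) \<longlongrightarrow> 0) at_top"
    proof (rule hurwitz_decay[OF M hurwitz, of t0])
      fix t j assume "t \<ge> t0" "j < 2*N"
      then show "((\<lambda>s. ?w s $ j) has_vector_derivative (M *\<^sub>v ?w t) $ j) (at t within {t0..})"
        using sol by (intro periodic_response_error[OF M a amplitude]) auto
    qed (use sol a i in auto)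
    then show ?thesis using a i by simp
  qed
  have "2*k-2 < 2*N" if "k \<in> {1..N}" for k using that by auto
  with not_eig decay show ?thesis unfolding M_def[symmetric] a_def[symmetric] g0_def[symmetric] by blast
qed

end
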